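(* Let $f\in\omega^{\subset\omega}$, let $\Xi$ be a family of completions of $f$ which blocks at width $n_\Xi$, and let $U$ be a $2n_\Xi$-branching set of extensions of $f$. Then there is a $2$-branching set of extensions of $f$, $U^*\subseteq U\cap\Xi$, such that for every $g\in U^*$, $\Xi\upharpoonright g$ blocks at width $n_\Xi$ (as a family of completions of $g$).
   Context: $\omega^{\subset\omega}$ is the set of partial functions from $\omega$ to $\omega$ with finite domain. For $f\in\omega^{\subset\omega}$, an $n$-branching set of extensions of $f$ of length $k$ is defined by induction on $k$: of length $1$, it is a set $U$ of $n$ functions such that for some fixed $x\notin\operatorname{dom}(f)$ each $g\in U$ satisfies $f\subseteq g$ and $\operatorname{dom}(g)=\operatorname{dom}(f)\cup\{x\}$; if $U_0$ is an $n$-branching set of extensions of $f$ of length $k$ and for each $g\in U_0$, $U_g$ is an $n$-branching set of extensions of $g$ of length $1$, then $\bigcup_{g\in U_0}U_g$ is an $n$-branching set of extensions of $f$ of length $k+1$. An $n$-branching set of extensions is one of some length $k\geq1$. A family of completions of $f$ is a set $\Xi\subseteq\omega^{\subset\omega}$ such that every $g\in\Xi$ satisfies $f\subseteq g$, and if $g\in\Xi$ and $f\subseteq h\subseteq g$ then $h\in\Xi$. $\Xi$ blocks at width $n$ if every $n$-branching set of extensions of $f$ has nonempty intersection with $\Xi$. For $g\in\Xi$, $\Xi\upharpoonright g=\{h\in\Xi: g\subseteq h\}$. *)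

theory Defs
  imports Main
begin

definition finpfun :: "(nat \<rightharpoonup> nat) set" where
  "finpfun = {f. finite (dom f)}"

inductive branching :: "nat \<Rightarrow> (nat \<rightharpoonup> nat) \<Rightarrow> nat \<Rightarrow> (nat \<rightharpoonup> nat) set \<Rightarrow> bool"
  for n :: nat where
  base: "\<lbrakk> x \<notin> dom f; finite U; card U = n;
           \<forall>g\<in>U. f \<subseteq>\<^sub>m g \<and> dom g = insert x (dom f) \<rbrakk>
         \<Longrightarrow> branching n f 1 U"
| step: "\<lbrakk> branching n f k U0; \<forall>g\<in>U0. branching n g 1 (V g) \<rbrakk>
         \<Longrightarrow> branching n f (Suc k) (\<Union>g\<in>U0. V g)"

definition is_branching :: "nat \<Rightarrow> (nat \<rightharpoonup> nat) \<Rightarrow> (nat \<rightharpoonup> nat) set \<Rightarrow> bool" where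
  "is_branching n f U \<longleftrightarrow> (\<exists>k\<ge>1. branching n f k U)"

definition completions :: "(nat \<rightharpoonup> nat) \<Rightarrow> (nat \<rightharpoonup> nat) set \<Rightarrow> bool" where
  "completions f Xi \<longleftrightarrow> Xi \<subseteq> finpfun \<and> (\<forall>g\<in>Xi. f \<subseteq>\<^sub>m g) \<and>
     (\<forall>g\<in>Xi. \<forall>h. f \<subseteq>\<^sub>m h \<and> h \<subseteq>\<^sub>m g \<longrightarrow> h \<in> Xi)"

definition blocks :: "(nat \<rightharpoonup> nat) \<Rightarrow> (nat \<rightharpoonup> nat) set \<Rightarrow> nat \<Rightarrow> bool" where
  "blocks f Xi n \<longleftrightarrow> (\<forall>U. is_branching n f U \<longrightarrow> U \<inter> Xi \<noteq> {})"

definition restr :: "(nat \<rightharpoonup> nat) set \<Rightarrow> (nat \<rightharpoonup> nat) \<Rightarrow> (nat \<rightharpoonup> nat) set" where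
  "restr Xi g = {h\<in>Xi. g \<subseteq>\<^sub>m h}"

end

theory Submission
  imports Defs
begin

text \<open>Call an extension g good if the restriction of Xi to g still blocks at width n. Among the 2n
  members of a single level above a good node at least two are good: otherwise n bad members
  carry n-branching sets of extensions missing Xi, and these, lengthened to a common length and
  stacked on those n members, form an n-branching set of extensions of the node that misses Xi.
  Choosing two good members level by level inside U yields the required 2-branching set.\<close>

lemma branching_length_pos: "branching n f k U \<Longrightarrow> 1 \<le> k"
  by (induction rule: branching.induct) auto

lemma branching_is_branching: "branching n f k U \<Longrightarrow> is_branching n f U"
  unfolding is_branching_def using branching_length_pos by blast

lemma branching_extends: "branching n f k U \<Longrightarrow> v \<in> U \<Longrightarrow> f \<subseteq>\<^sub>m v"
  by (induction arbitrary: v rule: branching.induct) (auto intro: map_le_trans)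

lemma branching_oneD:
  assumes "branching n f 1 W"
  shows "\<exists>x. x \<notin> dom f \<and> finite W \<and> card W = n \<and>
           (\<forall>g\<in>W. f \<subseteq>\<^sub>m g \<and> dom g = insert x (dom f))"
  using assms
proof (cases rule: branching.cases)
  case (step k U0 V)
  then show ?thesis using branching_length_pos by fastforce
qed auto

lemma branching_Suc_SucD:
  assumes "branching n f (Suc (Suc k)) U"
  shows "\<exists>A B. branching n f (Suc k) A \<and> (\<forall>g\<in>A. branching n g 1 (B g)) \<and> U = (\<Union>g\<in>A. B g)"
  using assms by (cases rule: branching.cases) auto

lemma branching_finite_dom:
  "branching n f k U \<Longrightarrow> finite (dom f) \<Longrightarrow> v \<in> U \<Longrightarrow> finite (dom v)"
proof (induction arbitrary: v rule: branching.induct)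
  case (step f k U0 V)
  then show ?case by (metis UN_E)
qed auto

lemma branching_one_exists:
  assumes "finite (dom g)"
  shows "\<exists>V. branching n g 1 V"
proof -
  obtain x where x: "x \<notin> dom g"
    using assms infinite_UNIV_nat by (metis finite_subset subsetI)
  let ?V = "(\<lambda>i. g(x \<mapsto> i)) ` {..<n}"
  have "inj_on (\<lambda>i. g(x \<mapsto> i)) {..<n}"
    unfolding inj_on_def by (metis fun_upd_same option.inject)
  then have "card ?V = n" by (simp add: card_image)
  moreover have "\<forall>h\<in>?V. g \<subseteq>\<^sub>m h \<and> dom h = insert x (dom g)"
    using x by (auto simp: map_le_def)
  ultimately show ?thesis using branching.base[OF x, of ?V n] by blast
qed

lemma branching_Suc_exists:
  assumes "branching n g k V" "finite (dom g)"
  shows "\<exists>V'. branching n g (Suc k) V' \<and> (\<forall>v'\<in>V'. \<exists>v\<in>V. v \<subseteq>\<^sub>m v')"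
proof -
  have "\<forall>v\<in>V. \<exists>S. branching n v 1 S"
    using branching_one_exists branching_finite_dom[OF assms] by blast
  then obtain S where S: "\<forall>v\<in>V. branching n v 1 (S v)" by metis
  have "branching n g (Suc k) (\<Union>v\<in>V. S v)" by (rule branching.step[OF assms(1) S])
  moreover have "\<forall>v'\<in>(\<Union>v\<in>V. S v). \<exists>v\<in>V. v \<subseteq>\<^sub>m v'"
    using S branching_extends by blast
  ultimately show ?thesis by blast
qed

lemma branching_lengthen:
  assumes "branching n g k V" "finite (dom g)" "k \<le> K"
  shows "\<exists>V'. branching n g K V' \<and> (\<forall>v'\<in>V'. \<exists>v\<in>V. v \<subseteq>\<^sub>m v')"
  using assms(3)
proof (induction K rule: dec_induct)
  case base
  show ?case using assms(1) map_le_refl by blast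
next
  case (step K)
  then obtain V' where V': "branching n g K V'" "\<forall>v'\<in>V'. \<exists>v\<in>V. v \<subseteq>\<^sub>m v'" by blast
  obtain V'' where "branching n g (Suc K) V''" "\<forall>v''\<in>V''. \<exists>v'\<in>V'. v' \<subseteq>\<^sub>m v''"
    using branching_Suc_exists[OF V'(1) assms(2)] by blast
  then show ?case using V'(2) by (meson map_le_trans)
qed

lemma branching_one_below_unique:
  assumes "branching n f 1 W" "h1 \<in> W" "h2 \<in> W" "h1 \<subseteq>\<^sub>m g" "h2 \<subseteq>\<^sub>m g"
  shows "h1 = h2"
proof -
  obtain x where "\<forall>h\<in>W. dom h = insert x (dom f)" using branching_oneD[OF assms(1)] by meson
  then have "dom h1 = dom h2" using assms(2,3) by simp
  then have "h1 \<subseteq>\<^sub>m h2" "h2 \<subseteq>\<^sub>m h1"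
    using assms(4,5) unfolding map_le_def by (metis domIff)+
  then show ?thesis by (rule map_le_antisym)
qed

lemma branching_prepend:
  "branching n f 1 W \<Longrightarrow> \<forall>h\<in>W. branching n h (Suc k) (V h) \<Longrightarrow>
   branching n f (Suc (Suc k)) (\<Union>h\<in>W. V h)"
proof (induction k arbitrary: V)
  case 0
  then show ?case using branching.step[of n f 1 W V] by simp
next
  case (Suc k)
  have "\<exists>A B. branching n h (Suc k) A \<and> (\<forall>g\<in>A. branching n g 1 (B g)) \<and>
                     V h = (\<Union>g\<in>A. B g)" if "h \<in> W" for h
    using Suc.prems(2) that by (intro branching_Suc_SucD) blast
  then obtain A B where AB: "\<And>h. h \<in> W \<Longrightarrow> branching n h (Suc k) (A h)"
      "\<And>h g. h \<in> W \<Longrightarrow> g \<in> A h \<Longrightarrow> branching n g 1 (B h g)"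
      "\<And>h. h \<in> W \<Longrightarrow> V h = (\<Union>g\<in>A h. B h g)"
    by metis
  have parent: "(THE h. h \<in> W \<and> g \<in> A h) = h" if "h \<in> W" "g \<in> A h" for h g
  proof (rule the_equality)
    fix h' assume h': "h' \<in> W \<and> g \<in> A h'"
    have "h \<subseteq>\<^sub>m g" "h' \<subseteq>\<^sub>m g" using that h' AB(1) branching_extends by blast+
    then show "h' = h" using that h' branching_one_below_unique[OF Suc.prems(1)] by blast
  qed (use that in simp)
  define C where "C g = B (THE h. h \<in> W \<and> g \<in> A h) g" for g
  have C: "C g = B h g" if "h \<in> W" "g \<in> A h" for h g
    unfolding C_def parent[OF that] ..
  have "branching n f (Suc (Suc (Suc k))) (\<Union>g\<in>(\<Union>h\<in>W. A h). C g)"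
  proof (rule branching.step)
    show "branching n f (Suc (Suc k)) (\<Union>h\<in>W. A h)" using Suc.IH[OF Suc.prems(1)] AB(1) by blast
    show "\<forall>g\<in>(\<Union>h\<in>W. A h). branching n g 1 (C g)" using AB(2) C by simp
  qed
  moreover have "(\<Union>g\<in>(\<Union>h\<in>W. A h). C g) = (\<Union>h\<in>W. V h)"
    using AB(3) C by (simp add: UN_UN_flatten cong: SUP_cong)
  ultimately show ?case by simp
qed

lemma restr_restr: "g \<subseteq>\<^sub>m h \<Longrightarrow> restr (restr Xi g) h = restr Xi h"
  unfolding restr_def using map_le_trans[of g h] by blast

lemma completions_restr:
  assumes "completions f Xi" "g \<in> Xi"
  shows "completions g (restr Xi g)"
  using assms map_le_trans unfolding completions_def restr_def by blast

lemma completions_downward: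
  "completions f Xi \<Longrightarrow> g \<in> Xi \<Longrightarrow> f \<subseteq>\<^sub>m h \<Longrightarrow> h \<subseteq>\<^sub>m g \<Longrightarrow> h \<in> Xi"
  unfolding completions_def by blast

lemma blocks_pos:
  assumes "finite (dom f)" "blocks f Xi n"
  shows "0 < n"
proof (rule ccontr)
  assume "\<not> 0 < n"
  then obtain V where V: "branching n f 1 V" using branching_one_exists assms(1) by blast
  then have "V \<inter> Xi \<noteq> {}" using assms(2) branching_is_branching unfolding blocks_def by blast
  moreover have "V = {}" using branching_oneD[OF V] \<open>\<not> 0 < n\<close> by fastforce
  ultimately show False by blast
qed

lemma mem_if_blocks_restr:
  assumes "completions f Xi" "f \<subseteq>\<^sub>m h" "finite (dom h)" "blocks h (restr Xi h) n"
  shows "h \<in> Xi"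
proof -
  obtain V where "branching n h 1 V" using branching_one_exists assms(3) by blast
  then obtain w where "w \<in> Xi" "h \<subseteq>\<^sub>m w"
    using assms(4) branching_is_branching unfolding blocks_def restr_def by blast
  then show ?thesis using assms(1,2) completions_downward by blast
qed

lemma level_contains_blocking:
  assumes fin: "finite (dom f)" and comp: "completions f Xi" and bl: "blocks f Xi n"
    and B: "branching n f 1 B"
  shows "\<exists>h\<in>B. blocks h (restr Xi h) n"
proof (rule ccontr)
  assume none: "\<not> ?thesis"
  have "\<exists>k V. branching n h k V \<and> V \<inter> Xi = {}" if h: "h \<in> B" for h
  proof -
    obtain k V where V: "branching n h k V" "V \<inter> restr Xi h = {}"
      using none h unfolding blocks_def is_branching_def by blast
    then have "V \<inter> Xi = {}" using branching_extends unfolding restr_def by blast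
    with V show ?thesis by blast
  qed
  then obtain kk VV where VV: "\<And>h. h \<in> B \<Longrightarrow> branching n h (kk h) (VV h)"
      "\<And>h. h \<in> B \<Longrightarrow> VV h \<inter> Xi = {}"
    by metis
  define K where "K = Max (kk ` B)"
  have "\<exists>W. branching n h (Suc K) W \<and> W \<inter> Xi = {}" if h: "h \<in> B" for h
  proof -
    have "finite B" using branching_oneD[OF B] by blast
    then have "kk h \<le> Suc K" unfolding K_def using h by (simp add: le_SucI)
    moreover have fh: "finite (dom h)" using branching_finite_dom[OF B fin h] .
    ultimately obtain W where W: "branching n h (Suc K) W" "\<forall>w\<in>W. \<exists>v\<in>VV h. v \<subseteq>\<^sub>m w"
      using branching_lengthen VV(1)[OF h] by blast
    have "f \<subseteq>\<^sub>m v" if "v \<in> VV h" for v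
      using branching_extends[OF B h] branching_extends[OF VV(1)[OF h] that] map_le_trans by blast
    then have "W \<inter> Xi = {}" using W(2) VV(2)[OF h] completions_downward[OF comp] by blast
    with W show ?thesis by blast
  qed
  then obtain W where W: "\<forall>h\<in>B. branching n h (Suc K) (W h)" "\<forall>h\<in>B. W h \<inter> Xi = {}"
    by metis
  have "is_branching n f (\<Union>h\<in>B. W h)"
    using branching_prepend[OF B W(1)] branching_is_branching by blast
  then show False using bl W(2) unfolding blocks_def by blast
qed

lemma two_blocking_extensions:
  assumes fin: "finite (dom f)" and comp: "completions f Xi" and bl: "blocks f Xi n"
    and W: "branching (2 * n) f 1 W"
  shows "\<exists>P. branching 2 f 1 P \<and> P \<subseteq> W \<inter> Xi \<and> (\<forall>h\<in>P. blocks h (restr Xi h) n)"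
proof -
  obtain x where x: "x \<notin> dom f" "finite W" "card W = 2 * n"
      "\<forall>g\<in>W. f \<subseteq>\<^sub>m g \<and> dom g = insert x (dom f)"
    using branching_oneD[OF W] by meson
  define G where "G = {h\<in>W. blocks h (restr Xi h) n}"
  have GW: "G \<subseteq> W" unfolding G_def by blast
  have GXi: "G \<subseteq> Xi"
  proof
    fix h assume "h \<in> G"
    then have "h \<in> W" "blocks h (restr Xi h) n" unfolding G_def by auto
    then show "h \<in> Xi"
      using mem_if_blocks_restr[OF comp] x(4) branching_finite_dom[OF W fin] by blast
  qed
  have "\<not> card G \<le> 1"
  proof
    assume "card G \<le> 1"
    moreover have "card (W - G) = 2 * n - card G"
      using GW x(2,3) by (simp add: card_Diff_subset finite_subset)
    ultimately have "n \<le> card (W - G)" using blocks_pos[OF fin bl] by linarith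
    then obtain B where B: "B \<subseteq> W - G" "card B = n" by (meson obtain_subset_with_card_n)
    have "branching n f 1 B"
    proof (rule branching.base[OF x(1)])
      show "finite B" using B(1) x(2) by (meson Diff_subset finite_subset subset_trans)
      show "\<forall>g\<in>B. f \<subseteq>\<^sub>m g \<and> dom g = insert x (dom f)"
        using B(1) x(4) by (meson DiffD1 subsetD)
    qed (fact B(2))
    then obtain h where "h \<in> B" "blocks h (restr Xi h) n"
      using level_contains_blocking[OF fin comp bl] by blast
    then show False using B(1) unfolding G_def by blast
  qed
  then obtain h1 h2 where h: "h1 \<in> G" "h2 \<in> G" "h1 \<noteq> h2"
    using card_le_Suc0_iff_eq[OF finite_subset[OF GW x(2)]] by auto
  have "branching 2 f 1 {h1, h2}"
  proof (rule branching.base[OF x(1)])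
    show "card {h1, h2} = 2" using h(3) by simp
    show "\<forall>g\<in>{h1, h2}. f \<subseteq>\<^sub>m g \<and> dom g = insert x (dom f)"
      unfolding ball_simps using h(1,2) GW x(4) by (meson subsetD)
  qed simp
  then show ?thesis using h GW GXi unfolding G_def by blast
qed

lemma blocking_subbranching:
  "branching (2 * n) f k U \<Longrightarrow> finite (dom f) \<Longrightarrow> completions f Xi \<Longrightarrow> blocks f Xi n \<Longrightarrow>
   \<exists>Us. branching 2 f k Us \<and> Us \<subseteq> U \<inter> Xi \<and> (\<forall>g\<in>Us. blocks g (restr Xi g) n)"
proof (induction rule: branching.induct)
  case (base x f U)
  show ?case by (rule two_blocking_extensions[OF base.prems branching.base[OF base.hyps]])
next
  case (step f k U0 V)
  obtain Us0 where Us0: "branching 2 f k Us0" "Us0 \<subseteq> U0 \<inter> Xi"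
      "\<forall>g\<in>Us0. blocks g (restr Xi g) n"
    using step.IH(1)[OF step.prems] by meson
  have "\<exists>P. branching 2 g 1 P \<and> P \<subseteq> V g \<inter> Xi \<and> (\<forall>h\<in>P. blocks h (restr Xi h) n)"
    if g: "g \<in> Us0" for g
  proof -
    have gXi: "g \<in> Xi" using g Us0(2) by blast
    have Vg: "branching (2 * n) g 1 (V g)" using g Us0(2) step.IH(2) by blast
    have "finite (dom g)" using gXi step.prems(2) unfolding completions_def finpfun_def by blast
    then obtain P where P: "branching 2 g 1 P" "P \<subseteq> V g \<inter> restr Xi g"
        "\<forall>h\<in>P. blocks h (restr (restr Xi g) h) n"
      using two_blocking_extensions[OF _ completions_restr[OF step.prems(2) gXi] _ Vg] g Us0(3)
      by meson
    have "restr (restr Xi g) h = restr Xi h" if "h \<in> P" for h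
      using restr_restr branching_extends[OF P(1) that] by blast
    with P show ?thesis unfolding restr_def by auto
  qed
  then obtain P where P: "\<forall>g\<in>Us0. branching 2 g 1 (P g) \<and> P g \<subseteq> V g \<inter> Xi \<and>
                                  (\<forall>h\<in>P g. blocks h (restr Xi h) n)"
    by metis
  have "branching 2 f (Suc k) (\<Union>g\<in>Us0. P g)" using branching.step[OF Us0(1)] P by blast
  moreover have "(\<Union>g\<in>Us0. P g) \<subseteq> (\<Union>g\<in>U0. V g) \<inter> Xi" using P Us0(2) by blast
  ultimately show ?case using P by blast
qed

theorem mainTheorem9:
  fixes f :: "nat \<rightharpoonup> nat" and Xi U :: "(nat \<rightharpoonup> nat) set" and n :: nat
  assumes "f \<in> finpfun"
    and "completions f Xi"
    and "blocks f Xi n"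
    and "is_branching (2 * n) f U"
  shows "\<exists>Ustar. is_branching 2 f Ustar \<and> Ustar \<subseteq> U \<inter> Xi \<and>
           (\<forall>g\<in>Ustar. completions g (restr Xi g) \<and> blocks g (restr Xi g) n)"
proof -
  obtain k where "branching (2 * n) f k U" using assms(4) unfolding is_branching_def by blast
  moreover have "finite (dom f)" using assms(1) unfolding finpfun_def by simp
  ultimately obtain Us where "branching 2 f k Us" "Us \<subseteq> U \<inter> Xi"
      "\<forall>g\<in>Us. blocks g (restr Xi g) n"
    using blocking_subbranching assms(2,3) by blast
  then show ?thesis using branching_is_branching completions_restr[OF assms(2)] by blast
qed

end
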